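(* Let $\alpha<\beta$ be positive integers. There is no function $f:\mathbb{N}\to\mathbb{N}$ such that $\mathrm{ecrw}_\alpha(G)\le f(\mathrm{ecrw}_\beta(G))$ for all graphs $G$. (Indeed, the graphs $G^{\alpha+1}_n$, $n\in\mathbb{N}$, have $\beta$-edge-crossing width $0$ and unbounded $\alpha$-edge-crossing width.)
   Context: For positive integers $n,k$, the graph $G^n_k$ has vertex set $A\cup B_k$ where $A=\{a_1,\dots,a_n\}$ and $B_k=\{(W,\ell): W\subseteq A,\ |W|=2,\ \ell\in[k]\}$, with $a\in A$ adjacent to $(W,\ell)$ iff $a\in W$, and no other edges. A tree-cut decomposition of a graph $G$ is a pair $\mathcal{T}=(T,\{X_t\}_{t\in V(T)})$ where $T$ is a tree and the bags $X_t\subseteq V(G)$ are pairwise disjoint (possibly empty) with $\bigcup_{t\in V(T)}X_t=V(G)$. For a node $t$ of $T$, let $T_1,\dots,T_m$ be the connected components of $T-t$ and $Z_i=\bigcup_{s\in V(T_i)}X_s$; $\mathrm{cross}_{\mathcal{T}}(t)$ is the number of edges of $G$ whose two endpoints lie in two distinct sets among $Z_1,\dots,Z_m$ (if $T$ has one node, $\mathrm{cross}_{\mathcal T}(t)=0$). The crossing number of $\mathcal{T}$ is $\max_{t}\mathrm{cross}_{\mathcal{T}}(t)$, and the thickness of $\mathcal{T}$ is $\max_t|X_t|$. $\mathrm{ecrw}_\alpha(G)$ is the minimum crossing number over tree-cut decompositions of $G$ of thickness at most $\alpha$. *)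

theory Defs
  imports Main
begin

definition graph :: "nat set \<Rightarrow> nat set set \<Rightarrow> bool" where
  "graph V E \<longleftrightarrow> finite V \<and> (\<forall>e\<in>E. \<exists>u v. e = {u, v} \<and> u \<noteq> v \<and> u \<in> V \<and> v \<in> V)"

definition adj_rel :: "nat set set \<Rightarrow> nat set \<Rightarrow> (nat \<times> nat) set" where
  "adj_rel ET S = {(x, y). x \<in> S \<and> y \<in> S \<and> {x, y} \<in> ET}"

definition is_tree :: "nat set \<Rightarrow> nat set set \<Rightarrow> bool" where
  "is_tree N ET \<longleftrightarrow> finite N \<and> N \<noteq> {} \<and> graph N ET
     \<and> (\<forall>s\<in>N. \<forall>t\<in>N. (s, t) \<in> (adj_rel ET N)\<^sup>*)
     \<and> \<not> (\<exists>cs. 3 \<le> length cs \<and> distinct cs \<and>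
              (\<forall>i<length cs. {cs ! i, cs ! ((i + 1) mod length cs)} \<in> ET))"

definition tree_cut_dec :: "nat set \<Rightarrow> nat set set \<Rightarrow> nat set \<Rightarrow> nat set set \<Rightarrow> (nat \<Rightarrow> nat set) \<Rightarrow> bool" where
  "tree_cut_dec V E N ET X \<longleftrightarrow> is_tree N ET
     \<and> (\<forall>s\<in>N. \<forall>t\<in>N. s \<noteq> t \<longrightarrow> X s \<inter> X t = {})
     \<and> (\<Union>t\<in>N. X t) = V"

definition cross :: "nat set set \<Rightarrow> nat set \<Rightarrow> nat set set \<Rightarrow> (nat \<Rightarrow> nat set) \<Rightarrow> nat \<Rightarrow> nat" where
  "cross E N ET X t = card {e \<in> E. \<exists>u v s s'. e = {u, v} \<and> s \<in> N - {t} \<and> s' \<in> N - {t}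
       \<and> u \<in> X s \<and> v \<in> X s' \<and> (s, s') \<notin> (adj_rel ET (N - {t}))\<^sup>*}"

definition crossing_number :: "nat set set \<Rightarrow> nat set \<Rightarrow> nat set set \<Rightarrow> (nat \<Rightarrow> nat set) \<Rightarrow> nat" where
  "crossing_number E N ET X = Max (cross E N ET X ` N)"

definition thickness :: "nat set \<Rightarrow> (nat \<Rightarrow> nat set) \<Rightarrow> nat" where
  "thickness N X = Max ((\<lambda>t. card (X t)) ` N)"

definition ecrw :: "nat \<Rightarrow> nat set \<Rightarrow> nat set set \<Rightarrow> nat" where
  "ecrw \<alpha> V E = Inf {crossing_number E N ET X | N ET X.
       tree_cut_dec V E N ET X \<and> thickness N X \<le> \<alpha>}"

end

theory Submission
  imports Defs "HOL-Library.Transitive_Closure_Table"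
begin

text \<open>Take the complete bipartite graph with sides A, |A| = \<alpha> + 1, and B, |B| = k. The star
  decomposition with A in the central bag and one vertex of B per leaf has thickness \<alpha> + 1 \<le> \<beta>
  and no crossing edge, so the \<beta>-width is 0. A decomposition of thickness \<alpha> cannot put A into
  one bag, so vertices a, a' of A lie in bags of distinct nodes p, q. If p, q are not adjacent, some
  node t separates them in the tree; if they are, every other node is cut off from p at q or from q
  at p. Either way every vertex of B outside the (at most two) bags of these nodes has an edge to a
  or a' that crosses at one of them, so the \<alpha>-width is at least (k - 2\<alpha>) / 2.\<close>

definition separated_by :: "nat set set \<Rightarrow> nat set \<Rightarrow> nat \<Rightarrow> nat \<Rightarrow> nat \<Rightarrow> bool" where
  "separated_by ET N t s s' \<longleftrightarrow> s \<in> N - {t} \<and> s' \<in> N - {t} \<and> (s, s') \<notin> (adj_rel ET (N - {t}))\<^sup>*"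

lemma adj_rel_converse: "(adj_rel ET S)\<inverse> = adj_rel ET S"
  by (auto simp: adj_rel_def insert_commute)

lemma adj_rel_rtrancl_sym: "(x, y) \<in> (adj_rel ET S)\<^sup>* \<Longrightarrow> (y, x) \<in> (adj_rel ET S)\<^sup>*"
  by (metis adj_rel_converse rtrancl_converseI)

lemma separated_by_cases:
  assumes "separated_by ET N t p q" and "s \<in> N - {t}"
  shows "separated_by ET N t p s \<or> separated_by ET N t q s"
proof (rule ccontr)
  assume "\<not> ?thesis"
  then have "(p, s) \<in> (adj_rel ET (N - {t}))\<^sup>*" "(q, s) \<in> (adj_rel ET (N - {t}))\<^sup>*"
    using assms unfolding separated_by_def by auto
  then have "(p, q) \<in> (adj_rel ET (N - {t}))\<^sup>*" by (meson adj_rel_rtrancl_sym rtrancl_trans)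
  then show False using assms(1) unfolding separated_by_def by blast
qed

lemma adj_rel_delete_vertex_subset: "v \<in> e \<Longrightarrow> adj_rel ET (N - {v}) \<subseteq> adj_rel (ET - {e}) N"
  unfolding adj_rel_def by auto

lemma graph_edge_endpoints:
  assumes "graph V E" and "{u, v} \<in> E"
  shows "u \<noteq> v" "u \<in> V" "v \<in> V"
proof -
  obtain u' v' where "{u, v} = {u', v'}" "u' \<noteq> v'" "u' \<in> V" "v' \<in> V"
    using assms unfolding graph_def by blast
  then show "u \<noteq> v" "u \<in> V" "v \<in> V" by (auto simp: doubleton_eq_iff)
qed

lemma is_treeD:
  assumes "is_tree N ET"
  shows "finite N" "graph N ET" "\<And>s t. s \<in> N \<Longrightarrow> t \<in> N \<Longrightarrow> (s, t) \<in> (adj_rel ET N)\<^sup>*"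
    and "\<And>cs. 3 \<le> length cs \<Longrightarrow> distinct cs \<Longrightarrow>
           \<exists>i<length cs. {cs ! i, cs ! ((i + 1) mod length cs)} \<notin> ET"
  using assms unfolding is_tree_def by auto

text \<open>A distinct path from x to y avoiding the edge {x, y} would close a cycle with it.\<close>

lemma tree_edge_disconnects:
  assumes T: "is_tree N ET" and e: "{x, y} \<in> ET"
  shows "(x, y) \<notin> (adj_rel (ET - {{x, y}}) N)\<^sup>*"
proof
  define R where "R = adj_rel (ET - {{x, y}}) N"
  assume "(x, y) \<in> (adj_rel (ET - {{x, y}}) N)\<^sup>*"
  then obtain xs where "rtrancl_path (\<lambda>a b. (a, b) \<in> R) x xs y"
    unfolding R_def by (metis rtranclp_eq_rtrancl_path Transitive_Closure.rtranclp_rtrancl_eq)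
  then obtain ys where path: "rtrancl_path (\<lambda>a b. (a, b) \<in> R) x ys y" and dist: "distinct (x # ys)"
    by (rule rtrancl_path_distinct)
  have "x \<noteq> y" using graph_edge_endpoints(1)[OF is_treeD(2)[OF T] e] .
  then have "ys \<noteq> []" using path by (auto elim: rtrancl_path.cases)
  have "ys \<noteq> [y]"
  proof
    assume "ys = [y]"
    then have "(x, y) \<in> R" using rtrancl_path_nth[OF path, of 0] by simp
    then show False unfolding R_def adj_rel_def by simp
  qed
  define cs where "cs = x # ys"
  have "3 \<le> length cs"
    using \<open>ys \<noteq> []\<close> \<open>ys \<noteq> [y]\<close> rtrancl_path_last[OF path] unfolding cs_def
    by (cases ys rule: rev_cases) (auto simp: Suc_le_eq)
  moreover have "distinct cs" using dist by (simp add: cs_def)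
  moreover have "{cs ! i, cs ! ((i + 1) mod length cs)} \<in> ET" if "i < length cs" for i
  proof (cases "i < length ys")
    case True
    then show ?thesis
      using rtrancl_path_nth[OF path True] by (simp add: cs_def R_def adj_rel_def)
  next
    case False
    then have "i = length ys" using that by (simp add: cs_def)
    then show ?thesis
      using e rtrancl_path_last[OF path \<open>ys \<noteq> []\<close>] \<open>ys \<noteq> []\<close>
      by (simp add: cs_def last_conv_nth insert_commute)
  qed
  ultimately show False using is_treeD(4)[OF T] by blast
qed

lemma rtrancl_adj_rel_first_step:
  assumes "(p, z) \<in> (adj_rel ET N)\<^sup>*" and "p \<noteq> z"
  shows "\<exists>w. (p, w) \<in> adj_rel ET N \<and> w \<noteq> p \<and> (w, z) \<in> (adj_rel ET (N - {p}))\<^sup>*"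
  using assms
proof (induction rule: rtrancl_induct)
  case (step y z)
  show ?case
  proof (cases "y = p")
    case True
    then show ?thesis using step by auto
  next
    case False
    then obtain w where w: "(p, w) \<in> adj_rel ET N" "w \<noteq> p" "(w, y) \<in> (adj_rel ET (N - {p}))\<^sup>*"
      using step.IH by blast
    have "(y, z) \<in> adj_rel ET (N - {p})" using step False by (auto simp: adj_rel_def)
    then show ?thesis using w by (meson rtrancl.rtrancl_into_rtrancl)
  qed
qed simp

text \<open>In a tree, the neighbour of p on the path to a non-neighbour q separates them.\<close>

lemma tree_nonadjacent_separated:
  assumes T: "is_tree N ET" and pq: "p \<in> N" "q \<in> N" "p \<noteq> q" "{p, q} \<notin> ET"
  shows "\<exists>t\<in>N. separated_by ET N t p q"
proof -
  have "(p, q) \<in> (adj_rel ET N)\<^sup>*" using is_treeD(3)[OF T pq(1,2)] .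
  then obtain w where pw: "(p, w) \<in> adj_rel ET N" "w \<noteq> p"
    and wq: "(w, q) \<in> (adj_rel ET (N - {p}))\<^sup>*"
    using rtrancl_adj_rel_first_step[OF _ pq(3)] by blast
  have w: "w \<in> N" "{p, w} \<in> ET" "w \<noteq> q" using pw pq(4) by (auto simp: adj_rel_def)
  define R where "R = adj_rel (ET - {{p, w}}) N"
  have "adj_rel ET (N - {w}) \<subseteq> R" "adj_rel ET (N - {p}) \<subseteq> R"
    unfolding R_def by (simp_all add: adj_rel_delete_vertex_subset)
  note R_closure = rtrancl_mono[OF this(1)] rtrancl_mono[OF this(2)]
  have "(p, q) \<notin> (adj_rel ET (N - {w}))\<^sup>*"
  proof
    assume "(p, q) \<in> (adj_rel ET (N - {w}))\<^sup>*"
    then have "(p, q) \<in> R\<^sup>*" using R_closure(1) by blast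
    moreover have "(w, q) \<in> R\<^sup>*" using wq R_closure(2) by blast
    ultimately have "(p, w) \<in> R\<^sup>*" unfolding R_def by (meson adj_rel_rtrancl_sym rtrancl_trans)
    then show False using tree_edge_disconnects[OF T w(2)] unfolding R_def by simp
  qed
  then have "separated_by ET N w p q" using w pw(2) pq unfolding separated_by_def by simp
  then show ?thesis using w(1) ..
qed

lemma tree_edge_separated:
  assumes T: "is_tree N ET" and e: "{p, q} \<in> ET" and s: "s \<in> N - {p, q}"
  shows "separated_by ET N p q s \<or> separated_by ET N q p s"
proof (rule ccontr)
  define R where "R = adj_rel (ET - {{p, q}}) N"
  have pq: "p \<in> N" "q \<in> N" "p \<noteq> q"
    using graph_edge_endpoints[OF is_treeD(2)[OF T] e] by blast+
  assume "\<not> ?thesis"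
  then have "(q, s) \<in> (adj_rel ET (N - {p}))\<^sup>*" "(p, s) \<in> (adj_rel ET (N - {q}))\<^sup>*"
    using s pq unfolding separated_by_def by auto
  moreover have "adj_rel ET (N - {p}) \<subseteq> R" "adj_rel ET (N - {q}) \<subseteq> R"
    unfolding R_def by (simp_all add: adj_rel_delete_vertex_subset)
  ultimately have "(q, s) \<in> R\<^sup>*" "(p, s) \<in> R\<^sup>*" using rtrancl_mono by blast+
  then have "(p, q) \<in> R\<^sup>*" unfolding R_def by (meson adj_rel_rtrancl_sym rtrancl_trans)
  then show False using tree_edge_disconnects[OF T e] unfolding R_def by simp
qed

definition starET :: "nat \<Rightarrow> nat set set" where
  "starET m = (\<lambda>i. {0, i}) ` {1..m}"

lemma starET_mem: "{a, b} \<in> starET m \<longleftrightarrow> (a = 0 \<and> 1 \<le> b \<and> b \<le> m) \<or> (b = 0 \<and> 1 \<le> a \<and> a \<le> m)"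
  unfolding starET_def by (auto simp: doubleton_eq_iff)

lemma starET_connected:
  assumes "0 \<notin> D" and "s \<in> {..m} - D" and "t \<in> {..m} - D"
  shows "(s, t) \<in> (adj_rel (starET m) ({..m} - D))\<^sup>*"
proof -
  have from_centre: "(0, v) \<in> (adj_rel (starET m) ({..m} - D))\<^sup>*" if "v \<in> {..m} - D" for v
  proof (cases "v = 0")
    case False
    then have "(0, v) \<in> adj_rel (starET m) ({..m} - D)"
      using that assms(1) by (auto simp: adj_rel_def starET_mem)
    then show ?thesis by blast
  qed simp
  show ?thesis
    using from_centre[OF assms(2)] from_centre[OF assms(3)] by (meson adj_rel_rtrancl_sym rtrancl_trans)
qed

text \<open>A cycle of a star would need two consecutive leaves, since its vertices are distinct.\<close>

lemma starET_acyclic: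
  assumes "3 \<le> length cs" and "distinct cs"
  shows "\<exists>i<length cs. {cs ! i, cs ! ((i + 1) mod length cs)} \<notin> starET m"
proof (rule ccontr)
  define L where "L = length cs"
  assume "\<not> ?thesis"
  then have centre: "cs ! i = 0 \<or> cs ! ((i + 1) mod L) = 0" if "i < L" for i
    using that unfolding L_def by (metis starET_mem)
  have inj: "i = j" if "i < L" "j < L" "cs ! i = cs ! j" for i j
    using assms(2) that unfolding L_def by (simp add: nth_eq_iff_index_eq)
  have "3 \<le> L" using assms(1) by (simp add: L_def)
  then have "3 mod L \<noteq> 1" "1 < L" "2 < L" by (auto simp: mod_if)
  then show False using centre[of 0] centre[of 1] centre[of 2] inj[of 0 1] inj[of 0 2] inj[of 1 2]
      inj[of 1 "3 mod L"] by (auto simp: numeral_eq_Suc)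
qed

lemma is_tree_starET: "is_tree {..m} (starET m)"
  unfolding is_tree_def
proof (intro conjI)
  show "graph {..m} (starET m)" unfolding graph_def starET_def by force
  show "\<forall>s\<in>{..m}. \<forall>t\<in>{..m}. (s, t) \<in> (adj_rel (starET m) {..m})\<^sup>*"
    using starET_connected[of "{}"] by simp
  show "\<not> (\<exists>cs. 3 \<le> length cs \<and> distinct cs \<and>
           (\<forall>i<length cs. {cs ! i, cs ! ((i + 1) mod length cs)} \<in> starET m))"
    using starET_acyclic by blast
qed auto

definition star_bags :: "nat set \<Rightarrow> (nat \<Rightarrow> nat) \<Rightarrow> nat \<Rightarrow> nat set" where
  "star_bags C f t = (if t = 0 then C else {f (t - 1)})"

lemma tree_cut_dec_star_bags:
  assumes "C \<inter> f ` {..<m} = {}" and "inj_on f {..<m}"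
  shows "tree_cut_dec (C \<union> f ` {..<m}) E {..m} (starET m) (star_bags C f)"
  unfolding tree_cut_dec_def
proof (intro conjI)
  show "\<forall>s\<in>{..m}. \<forall>t\<in>{..m}. s \<noteq> t \<longrightarrow> star_bags C f s \<inter> star_bags C f t = {}"
  proof (intro ballI impI)
    fix s t assume "s \<in> {..m}" "t \<in> {..m}" "s \<noteq> t"
    then show "star_bags C f s \<inter> star_bags C f t = {}"
      using assms by (cases "s = 0"; cases "t = 0") (auto simp: star_bags_def inj_on_eq_iff)
  qed
  show "(\<Union>t\<in>{..m}. star_bags C f t) = C \<union> f ` {..<m}"
  proof
    show "C \<union> f ` {..<m} \<subseteq> (\<Union>t\<in>{..m}. star_bags C f t)"
    proof
      fix x assume "x \<in> C \<union> f ` {..<m}"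
      then consider "x \<in> C" | i where "i < m" "x = f i" by blast
      then show "x \<in> (\<Union>t\<in>{..m}. star_bags C f t)"
      proof cases
        case 1
        then show ?thesis by (intro UN_I[of 0]) (auto simp: star_bags_def)
      next
        case (2 i)
        then show ?thesis by (intro UN_I[of "Suc i"]) (auto simp: star_bags_def)
      qed
    qed
  qed (auto simp: star_bags_def split: if_splits)
qed (rule is_tree_starET)

lemma thickness_star_bags: "card C \<le> \<alpha> \<Longrightarrow> 1 \<le> \<alpha> \<Longrightarrow> thickness {..m} (star_bags C f) \<le> \<alpha>"
  unfolding thickness_def by (subst Max_le_iff) (auto simp: star_bags_def)

lemma tree_cut_decD:
  assumes "tree_cut_dec V E N ET X"
  shows "is_tree N ET" "\<And>s s'. s \<in> N \<Longrightarrow> s' \<in> N \<Longrightarrow> s \<noteq> s' \<Longrightarrow> X s \<inter> X s' = {}"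
    and "\<And>t. t \<in> N \<Longrightarrow> X t \<subseteq> V" "\<And>v. v \<in> V \<Longrightarrow> \<exists>s\<in>N. v \<in> X s"
  using assms unfolding tree_cut_dec_def by auto

lemma cross_eq_0_if_connected:
  assumes "\<And>s s'. s \<in> N - {t} \<Longrightarrow> s' \<in> N - {t} \<Longrightarrow> (s, s') \<in> (adj_rel ET (N - {t}))\<^sup>*"
  shows "cross E N ET X t = 0"
proof -
  have "{e \<in> E. \<exists>u v s s'. e = {u, v} \<and> s \<in> N - {t} \<and> s' \<in> N - {t}
       \<and> u \<in> X s \<and> v \<in> X s' \<and> (s, s') \<notin> (adj_rel ET (N - {t}))\<^sup>*} = {}"
    using assms by blast
  then show ?thesis unfolding cross_def by (metis card.empty)
qed

lemma cross_eq_0_if_edges_meet_bag: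
  assumes disjoint: "\<And>s s'. s \<in> N \<Longrightarrow> s' \<in> N \<Longrightarrow> s \<noteq> s' \<Longrightarrow> X s \<inter> X s' = {}" and "t \<in> N"
    and meet: "\<And>e. e \<in> E \<Longrightarrow> e \<inter> X t \<noteq> {}"
  shows "cross E N ET X t = 0"
proof -
  have outside: "u \<notin> X t" if "u \<in> X s" "s \<in> N - {t}" for u s
    using disjoint that \<open>t \<in> N\<close> by blast
  have "{e \<in> E. \<exists>u v s s'. e = {u, v} \<and> s \<in> N - {t} \<and> s' \<in> N - {t}
       \<and> u \<in> X s \<and> v \<in> X s' \<and> (s, s') \<notin> (adj_rel ET (N - {t}))\<^sup>*} = {}"
    using meet outside by blast
  then show ?thesis unfolding cross_def by (metis card.empty)
qed

definition beyond :: "nat set set \<Rightarrow> nat set \<Rightarrow> (nat \<Rightarrow> nat set) \<Rightarrow> nat \<Rightarrow> nat \<Rightarrow> nat set" where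
  "beyond ET N X t s = {v. \<exists>s'. v \<in> X s' \<and> separated_by ET N t s s'}"

lemma bag_subset_beyond_separator:
  assumes "separated_by ET N t p q" and "s \<in> N"
  shows "X s \<subseteq> beyond ET N X t p \<union> beyond ET N X t q \<union> X t"
  using separated_by_cases[OF assms(1), of s] assms(2) unfolding beyond_def by (cases "s = t") auto

lemma bag_subset_beyond_tree_edge:
  assumes "is_tree N ET" and "{p, q} \<in> ET" and "s \<in> N"
  shows "X s \<subseteq> beyond ET N X p q \<union> beyond ET N X q p \<union> (X p \<union> X q)"
  using tree_edge_separated[OF assms(1,2), of s] assms(3) unfolding beyond_def
  by (cases "s = p \<or> s = q") auto

lemma card_neighbours_beyond_le_cross:
  assumes "finite E" and "a \<in> X s" and "a \<notin> B" and "\<And>b. b \<in> B \<Longrightarrow> {a, b} \<in> E"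
  shows "card (B \<inter> beyond ET N X t s) \<le> cross E N ET X t"
proof -
  let ?D = "B \<inter> beyond ET N X t s"
  have "inj_on (\<lambda>b. {a, b}) ?D" using \<open>a \<notin> B\<close> by (auto simp: inj_on_def doubleton_eq_iff)
  then have "card ?D = card ((\<lambda>b. {a, b}) ` ?D)" by (simp add: card_image)
  also have "\<dots> \<le> cross E N ET X t"
    unfolding cross_def
  proof (rule card_mono)
    show "(\<lambda>b. {a, b}) ` ?D \<subseteq> {e \<in> E. \<exists>u v s s'. e = {u, v} \<and> s \<in> N - {t} \<and> s' \<in> N - {t}
       \<and> u \<in> X s \<and> v \<in> X s' \<and> (s, s') \<notin> (adj_rel ET (N - {t}))\<^sup>*}"
      using assms(2,4) unfolding beyond_def separated_by_def by blast
  qed (simp add: \<open>finite E\<close>)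
  finally show ?thesis .
qed

lemma cross_le_crossing_number: "finite N \<Longrightarrow> t \<in> N \<Longrightarrow> cross E N ET X t \<le> crossing_number E N ET X"
  unfolding crossing_number_def by simp

lemma card_le_thickness: "finite N \<Longrightarrow> t \<in> N \<Longrightarrow> card (X t) \<le> thickness N X"
  unfolding thickness_def by simp

lemma ecrw_le_crossing_number:
  "tree_cut_dec V E N ET X \<Longrightarrow> thickness N X \<le> \<alpha> \<Longrightarrow> ecrw \<alpha> V E \<le> crossing_number E N ET X"
  unfolding ecrw_def by (rule cInf_lower) auto

text \<open>Since Inf {} = 0 on nat, a lower bound on ecrw needs some admissible decomposition; the star
  with one vertex per leaf has thickness 1.\<close>

lemma le_ecrwI:
  assumes "finite V" and "1 \<le> \<alpha>"
    and bound: "\<And>N ET X. tree_cut_dec V E N ET X \<Longrightarrow> thickness N X \<le> \<alpha> \<Longrightarrow> c \<le> crossing_number E N ET X"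
  shows "c \<le> ecrw \<alpha> V E"
proof -
  obtain f where f: "bij_betw f {..<card V} V"
    using ex_bij_betw_nat_finite[OF \<open>finite V\<close>] by (auto simp: lessThan_atLeast0)
  then have "tree_cut_dec ({} \<union> f ` {..<card V}) E {..card V} (starET (card V)) (star_bags {} f)"
    by (intro tree_cut_dec_star_bags) (auto simp: bij_betw_def)
  moreover have "thickness {..card V} (star_bags {} f) \<le> \<alpha>"
    using \<open>1 \<le> \<alpha>\<close> by (intro thickness_star_bags) auto
  ultimately show ?thesis
    using f bound unfolding ecrw_def bij_betw_def by (intro cInf_greatest) auto
qed

text \<open>The paper uses the graphs G^(\<alpha>+1)_k; the complete bipartite graph K_(\<alpha>+1,k) on
  {..<\<alpha>+1} and {\<alpha>+1..<\<alpha>+1+k} serves equally well: all that matters is a side of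
  \<alpha> + 1 vertices each adjacent to every vertex of an arbitrarily large other side.\<close>

definition bipartite_edges :: "nat \<Rightarrow> nat \<Rightarrow> nat set set" where
  "bipartite_edges n k = {{a, b} | a b. a < n \<and> n \<le> b \<and> b < n + k}"

lemma finite_bipartite_edges: "finite (bipartite_edges n k)"
proof -
  have "bipartite_edges n k = (\<lambda>(a, b). {a, b}) ` ({..<n} \<times> {n..<n + k})"
    unfolding bipartite_edges_def by force
  then show ?thesis by simp
qed

lemma bipartite_edgesI: "a < n \<Longrightarrow> n \<le> b \<Longrightarrow> b < n + k \<Longrightarrow> {a, b} \<in> bipartite_edges n k"
  unfolding bipartite_edges_def by blast

lemma graph_bipartite_edges: "graph {..<n + k} (bipartite_edges n k)"
  unfolding graph_def bipartite_edges_def by force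

lemma ecrw_bipartite_eq_0:
  assumes "n \<le> \<beta>" and "1 \<le> \<beta>"
  shows "ecrw \<beta> {..<n + k} (bipartite_edges n k) = 0"
proof -
  define X where "X = star_bags {..<n} (plus n)"
  have "plus n ` {..<k} = {n..<n + k}"
    using image_add_atLeastLessThan[of n 0 k] by (simp add: lessThan_atLeast0 add.commute)
  then have V: "{..<n} \<union> plus n ` {..<k} = {..<n + k}" and disj: "{..<n} \<inter> plus n ` {..<k} = {}"
    by (auto simp: ivl_disj_un_one(2))
  have tcd: "tree_cut_dec {..<n + k} (bipartite_edges n k) {..k} (starET k) X"
    using tree_cut_dec_star_bags[OF disj] unfolding X_def V by simp
  have cross0: "cross (bipartite_edges n k) {..k} (starET k) X t = 0" if "t \<le> k" for t
  proof (cases "t = 0")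
    case True
    show ?thesis
      by (rule cross_eq_0_if_edges_meet_bag[OF tree_cut_decD(2)[OF tcd]])
        (auto simp: True X_def star_bags_def bipartite_edges_def)
  next
    case False
    then show ?thesis by (intro cross_eq_0_if_connected starET_connected) auto
  qed
  have "crossing_number (bipartite_edges n k) {..k} (starET k) X = 0"
    unfolding crossing_number_def using cross0 by (subst Max_eq_iff) auto
  moreover have "thickness {..k} X \<le> \<beta>" unfolding X_def using assms by (intro thickness_star_bags) auto
  ultimately show ?thesis using ecrw_le_crossing_number[OF tcd] by fastforce
qed

lemma card_le_card_cover:
  assumes "finite A" "finite A'" "finite Y" and "B \<subseteq> A \<union> A' \<union> Y"
  shows "card B \<le> card A + card A' + card Y"
proof -
  have "card B \<le> card (A \<union> A' \<union> Y)" using assms by (intro card_mono) auto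
  also have "\<dots> \<le> card A + card A' + card Y" by (meson card_Un_le add_right_mono le_trans)
  finally show ?thesis .
qed

lemma card_common_neighbours_le:
  assumes tcd: "tree_cut_dec V E N ET X" and thick: "thickness N X \<le> \<alpha>"
    and fin: "finite V" "finite E" and B: "B \<subseteq> V"
    and pq: "p \<in> N" "q \<in> N" "p \<noteq> q"
    and a: "a \<in> X p" "a \<notin> B" and a': "a' \<in> X q" "a' \<notin> B"
    and edges: "\<And>b. b \<in> B \<Longrightarrow> {a, b} \<in> E \<and> {a', b} \<in> E"
  shows "card B \<le> 2 * crossing_number E N ET X + 2 * \<alpha>"
proof -
  define cn where "cn = crossing_number E N ET X"
  define far where "far t s = B \<inter> beyond ET N X t s" for t s
  note T = tree_cut_decD(1)[OF tcd]
  have finN: "finite N" by (rule is_treeD(1)[OF T])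
  have finB: "finite B" and finX: "\<And>t. t \<in> N \<Longrightarrow> finite (X t)"
    using B fin(1) tree_cut_decD(3)[OF tcd] by (auto intro: finite_subset)
  have cardX: "card (X t) \<le> \<alpha>" if "t \<in> N" for t
    using card_le_thickness[OF finN that, where X = X] thick by simp
  have far_p: "card (far t p) \<le> cn" and far_q: "card (far t q) \<le> cn" if "t \<in> N" for t
    using card_neighbours_beyond_le_cross[where X = X and s = p, OF fin(2) a]
      card_neighbours_beyond_le_cross[where X = X and s = q, OF fin(2) a']
      cross_le_crossing_number[OF finN that, of E ET X] edges
    unfolding far_def cn_def by (meson le_trans)+
  have home: "\<exists>s\<in>N. b \<in> X s" if "b \<in> B" for b using tree_cut_decD(4)[OF tcd] B that by blast
  show ?thesis
  proof (cases "{p, q} \<in> ET")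
    case True
    have "B \<subseteq> far p q \<union> far q p \<union> (X p \<union> X q)"
      using home bag_subset_beyond_tree_edge[OF T True, where X = X] unfolding far_def by blast
    then have "card B \<le> card (far p q) + card (far q p) + card (X p \<union> X q)"
      using finB finX pq by (intro card_le_card_cover) (auto simp: far_def)
    then show ?thesis
      using far_q[OF pq(1)] far_p[OF pq(2)] cardX[OF pq(1)] cardX[OF pq(2)] card_Un_le[of "X p" "X q"]
      unfolding cn_def by linarith
  next
    case False
    then obtain t where t: "t \<in> N" "separated_by ET N t p q"
      using tree_nonadjacent_separated[OF T pq] by blast
    have "B \<subseteq> far t p \<union> far t q \<union> X t"
      using home bag_subset_beyond_separator[OF t(2), where X = X] unfolding far_def by blast
    then have "card B \<le> card (far t p) + card (far t q) + card (X t)"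
      using finB finX t by (intro card_le_card_cover) (auto simp: far_def)
    then show ?thesis using far_p[OF t(1)] far_q[OF t(1)] cardX[OF t(1)] unfolding cn_def by linarith
  qed
qed

lemma bipartite_le_crossing_number:
  assumes tcd: "tree_cut_dec {..<Suc \<alpha> + k} (bipartite_edges (Suc \<alpha>) k) N ET X"
    and thick: "thickness N X \<le> \<alpha>"
  shows "k \<le> 2 * crossing_number (bipartite_edges (Suc \<alpha>) k) N ET X + 2 * \<alpha>"
proof -
  have finN: "finite N" using is_treeD(1)[OF tree_cut_decD(1)[OF tcd]] .
  obtain p where p: "p \<in> N" "0 \<in> X p" using tree_cut_decD(4)[OF tcd, of 0] by auto
  have "\<not> {..<Suc \<alpha>} \<subseteq> X p"
  proof
    assume "{..<Suc \<alpha>} \<subseteq> X p"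
    moreover have "finite (X p)" using tree_cut_decD(3)[OF tcd p(1)] by (rule finite_subset) simp
    ultimately have "card {..<Suc \<alpha>} \<le> card (X p)" by (rule card_mono[rotated])
    then show False using card_le_thickness[OF finN p(1), where X = X] thick by simp
  qed
  then obtain a' where a': "a' < Suc \<alpha>" "a' \<notin> X p" by auto
  then obtain q where q: "q \<in> N" "a' \<in> X q" using tree_cut_decD(4)[OF tcd, of a'] by auto
  have "p \<noteq> q" using a' q by auto
  have "card {Suc \<alpha>..<Suc \<alpha> + k} \<le> 2 * crossing_number (bipartite_edges (Suc \<alpha>) k) N ET X + 2 * \<alpha>"
  proof (rule card_common_neighbours_le[OF tcd thick _ finite_bipartite_edges _ p(1) q(1) \<open>p \<noteq> q\<close>
        p(2) _ q(2)])
    fix b assume "b \<in> {Suc \<alpha>..<Suc \<alpha> + k}"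
    then show "{0, b} \<in> bipartite_edges (Suc \<alpha>) k \<and> {a', b} \<in> bipartite_edges (Suc \<alpha>) k"
      using a'(1) by (simp add: bipartite_edgesI)
  qed (use a'(1) in auto)
  then show ?thesis by simp
qed

theorem lemma3p4:
  fixes \<alpha> \<beta> :: nat
  assumes "0 < \<alpha>" and "\<alpha> < \<beta>"
  shows "\<not> (\<exists>f :: nat \<Rightarrow> nat. \<forall>V E. graph V E \<longrightarrow> ecrw \<alpha> V E \<le> f (ecrw \<beta> V E))"
proof
  assume "\<exists>f :: nat \<Rightarrow> nat. \<forall>V E. graph V E \<longrightarrow> ecrw \<alpha> V E \<le> f (ecrw \<beta> V E)"
  then obtain f :: "nat \<Rightarrow> nat" where f: "\<And>V E. graph V E \<Longrightarrow> ecrw \<alpha> V E \<le> f (ecrw \<beta> V E)"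
    by blast
  define k where "k = 2 * f 0 + 2 * \<alpha> + 2"
  define V where "V = {..<Suc \<alpha> + k}"
  define E where "E = bipartite_edges (Suc \<alpha>) k"
  have "ecrw \<beta> V E = 0" unfolding V_def E_def using assms by (intro ecrw_bipartite_eq_0) auto
  then have "ecrw \<alpha> V E \<le> f 0" using f[OF graph_bipartite_edges[of "Suc \<alpha>" k]] unfolding V_def E_def by simp
  moreover have "f 0 + 1 \<le> ecrw \<alpha> V E"
  proof (rule le_ecrwI)
    fix N ET X assume "tree_cut_dec V E N ET X" "thickness N X \<le> \<alpha>"
    then have "k \<le> 2 * crossing_number E N ET X + 2 * \<alpha>"
      unfolding V_def E_def by (rule bipartite_le_crossing_number)
    then show "f 0 + 1 \<le> crossing_number E N ET X" unfolding k_def by linarith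
  qed (use assms in \<open>auto simp: V_def\<close>)
  ultimately show False by simp
qed

end
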